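(* For all integers $p \ge 0$ and $n \ge 1$, \[ p! + \sum_{t=0}^{p} \begin{bmatrix} p+1 \\ t+1 \end{bmatrix} S_t(n) = p! \binom{n+p+1}{p+1}. \]
   Context: $S_t(n) = 1^t + 2^t + \cdots + n^t$ for integers $t \ge 0$ (so $S_0(n)=n$). $\begin{bmatrix} m \\ k \end{bmatrix}$ denotes the unsigned Stirling number of the first kind: the number of permutations of $m$ elements with exactly $k$ cycles. *)

theory Defs
  imports Main "HOL-Combinatorics.Stirling"
begin

definition power_sum :: "nat \<Rightarrow> nat \<Rightarrow> nat" where
  "power_sum t n = (\<Sum>k=1..n. k ^ t)"

end

theory Submission
  imports Defs
begin

text \<open>Expanding the power sums and summing over k first, the inner sum
  \<open>\<Sum>\<^sub>t [p+1, t+1] k\<^sup>t\<close> is the Stirling expansion of the rising factorial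
  \<open>x(x+1)\<cdots>(x+p)\<close> divided by x, evaluated at x = k; that is \<open>(k+1)\<cdots>(k+p) = p! C(k+p, p)\<close>.
  The extra term p! is the value at k = 0, and the hockey-stick identity sums
  \<open>C(k+p, p)\<close> over \<open>0 \<le> k \<le> n\<close> to \<open>C(n+p+1, p+1)\<close>.\<close>

lemma pochhammer_of_nat_Suc_eq_fact_binomial:
  "pochhammer (of_nat k + 1) p
     = (fact p * of_nat ((k + p) choose p) :: 'a::{comm_semiring_1, semiring_char_0})"
proof (induction p)
  case 0
  then show ?case by simp
next
  case (Suc p)
  have "pochhammer (of_nat k + 1) (Suc p)
      = fact p * of_nat ((k + p) choose p) * (of_nat (Suc (k + p)) :: 'a)"
    using Suc by (simp add: pochhammer_Suc algebra_simps)
  also have "\<dots> = fact p * of_nat (Suc (k + p) * ((k + p) choose p))"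
    by (simp add: algebra_simps)
  also have "\<dots> = fact p * of_nat ((Suc (k + p) choose Suc p) * Suc p)"
    by (simp only: Suc_times_binomial_eq)
  also have "\<dots> = fact (Suc p) * of_nat ((k + Suc p) choose Suc p)"
    by (simp add: algebra_simps)
  finally show ?case .
qed

lemma sum_stirling_Suc_Suc_power:
  "(\<Sum>t\<le>p. of_nat (stirling (Suc p) (Suc t)) * x ^ t)
     = (pochhammer (x + 1) p :: 'a::{comm_semiring_1, semiring_no_zero_divisors_cancel})"
proof (cases "x = 0")
  case True
  have "(\<Sum>t\<le>p. of_nat (stirling (Suc p) (Suc t)) * x ^ t) = (of_nat (fact p) :: 'a)"
    using True by (simp add: sum.atMost_shift stirling_Suc_n_1 del: stirling.simps)
  then show ?thesis
    using True pochhammer_of_nat[of 1 p, where 'a='a] by (simp add: pochhammer_fact del: stirling.simps)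
next
  case False
  txt \<open>Multiplied by x, the sum is the Stirling expansion of \<open>pochhammer x (Suc p)\<close>.\<close>
  have "x * (\<Sum>t\<le>p. of_nat (stirling (Suc p) (Suc t)) * x ^ t)
      = (\<Sum>j\<le>Suc p. of_nat (stirling (Suc p) j) * x ^ j)"
    by (subst sum.atMost_Suc_shift) (simp add: sum_distrib_left algebra_simps del: stirling.simps)
  also have "\<dots> = x * pochhammer (x + 1) p"
    by (simp add: stirling_pochhammer pochhammer_rec)
  finally show ?thesis
    using False by simp
qed

lemma sum_binomial_upper_shift:
  "(\<Sum>k\<le>n. (k + p) choose p) = (n + p + 1) choose (p + 1)"
proof -
  have "(\<Sum>k\<le>n. (k + p) choose p) = (\<Sum>k\<le>n. (p + k) choose k)"
    by (rule sum.cong) (simp_all add: binomial_symmetric[of p "_ + p"] add.commute)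
  also have "\<dots> = Suc (p + n) choose n"
    by (rule sum_choose_lower)
  also have "\<dots> = (n + p + 1) choose (p + 1)"
    using binomial_symmetric[of n "Suc (p + n)"] by (simp add: add.commute)
  finally show ?thesis .
qed

lemma sum_mult_power_sum:
  "(\<Sum>t\<in>T. c t * power_sum t n) = (\<Sum>k=1..n. \<Sum>t\<in>T. c t * k ^ t)"
  unfolding power_sum_def by (simp add: sum_distrib_left sum.swap[of _ T])

theorem mainTheorem5:
  fixes p n :: nat
  assumes "n \<ge> 1"
  shows "fact p + (\<Sum>t=0..p. stirling (p+1) (t+1) * power_sum t n)
           = fact p * ((n + p + 1) choose (p + 1))"
proof -
  have rising_factorial: "(\<Sum>t=0..p. stirling (p+1) (t+1) * k ^ t) = fact p * ((k + p) choose p)"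
    for k :: nat
    using sum_stirling_Suc_Suc_power[of p k]
      pochhammer_of_nat_Suc_eq_fact_binomial[of k p, where 'a=nat]
    by (simp add: atLeast0AtMost del: stirling.simps)
  have "(\<Sum>t=0..p. stirling (p+1) (t+1) * power_sum t n)
      = (\<Sum>k=1..n. fact p * ((k + p) choose p))"
    by (simp only: sum_mult_power_sum rising_factorial)
  then have "fact p + (\<Sum>t=0..p. stirling (p+1) (t+1) * power_sum t n)
      = fact p * ((0 + p) choose p) + (\<Sum>k=1..n. fact p * ((k + p) choose p))"
    by simp
  also have "\<dots> = fact p * (\<Sum>k\<le>n. (k + p) choose p)"
    by (simp add: sum_distrib_left atMost_atLeast0 sum.atLeast_Suc_atMost[of 0 n])
  also have "\<dots> = fact p * ((n + p + 1) choose (p + 1))"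
    by (simp only: sum_binomial_upper_shift)
  finally show ?thesis .
qed

end
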